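(* Let $G$ be a finite group and $O=C_1\sqcup\dots\sqcup C_m$ a disjoint union of conjugacy classes of $G$, none equal to $\{1\}$, such that the elements of each class $C_i$ generate $G$. Then the power series $\chi_{(G,O)}(t_1,\dots,t_m)=\sum_{\bar k\in\mathbb Z_{\ge0}^m}h_{\bar k}t_1^{k_1}\cdots t_m^{k_m}$ is a rational function, where $h_{\bar k}$ is the number of elements $s\in S(G,O)^G_{\mathbf 1}$ with $\tau(s)=\bar k$.
   Context: The factorization semigroup $S(G,O)$ is generated by symbols $x_g$, $g\in O$, subject to $x_{g_1}x_{g_2}=x_{g_2}x_{g_2^{-1}g_1g_2}=x_{g_1g_2g_1^{-1}}x_{g_1}$ ($g_1,g_2\in O$); $\alpha_G:S(G,O)\to G$, $x_g\mapsto g$. For $s=x_{g_1}\cdots x_{g_n}$, $G_s$ is the subgroup generated by $g_1,\dots,g_n$ (well defined). $S(G,O)^G_{\mathbf 1}=\{s:G_s=G,\ \alpha_G(s)=1\}$. The type is $\tau(s)=(\tau_1(s),\dots,\tau_m(s))$, where $\tau_i(s)$ is the number of factors $x_g$ of $s$ with $g\in C_i$. *)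

theory Defs
  imports "HOL-Algebra.Algebra"
begin

text \<open>Words over Ocl represent elements of the factorization semigroup S(G,Ocl).
  One elementary (Hurwitz) move replaces an adjacent pair x_a x_b by
  x_b x_{b^-1 a b} or by x_{a b a^-1} x_a.\<close>

definition hurwitz_step :: "('a, 'b) monoid_scheme \<Rightarrow> 'a set \<Rightarrow> 'a list \<Rightarrow> 'a list \<Rightarrow> bool" where
  "hurwitz_step G Ocl w w' \<longleftrightarrow>
     (\<exists>u v a b. a \<in> Ocl \<and> b \<in> Ocl \<and> w = u @ [a, b] @ v \<and>
        (w' = u @ [b, inv\<^bsub>G\<^esub> b \<otimes>\<^bsub>G\<^esub> a \<otimes>\<^bsub>G\<^esub> b] @ v \<or>
         w' = u @ [a \<otimes>\<^bsub>G\<^esub> b \<otimes>\<^bsub>G\<^esub> inv\<^bsub>G\<^esub> a, a] @ v))"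

definition fact_equiv :: "('a, 'b) monoid_scheme \<Rightarrow> 'a set \<Rightarrow> 'a list \<Rightarrow> 'a list \<Rightarrow> bool" where
  "fact_equiv G Ocl = (\<lambda>w w'. hurwitz_step G Ocl w w' \<or> hurwitz_step G Ocl w' w)\<^sup>*\<^sup>*"

definition fact_class :: "('a, 'b) monoid_scheme \<Rightarrow> 'a set \<Rightarrow> 'a list \<Rightarrow> 'a list set" where
  "fact_class G Ocl w = {w'. fact_equiv G Ocl w w'}"

definition word_prod :: "('a, 'b) monoid_scheme \<Rightarrow> 'a list \<Rightarrow> 'a" where
  "word_prod G w = foldr (\<lambda>g h. g \<otimes>\<^bsub>G\<^esub> h) w \<one>\<^bsub>G\<^esub>"

definition word_type :: "(nat \<Rightarrow> 'a set) \<Rightarrow> nat \<Rightarrow> 'a list \<Rightarrow> (nat \<Rightarrow> nat)" where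
  "word_type C m w = (\<lambda>i. if i < m then length (filter (\<lambda>g. g \<in> C i) w) else 0)"

definition h_coeff :: "('a, 'b) monoid_scheme \<Rightarrow> 'a set \<Rightarrow> (nat \<Rightarrow> 'a set) \<Rightarrow> nat \<Rightarrow> (nat \<Rightarrow> nat) \<Rightarrow> nat" where
  "h_coeff G Ocl C m k = card (fact_class G Ocl `
      {w. set w \<subseteq> Ocl \<and> generate G (set w) = carrier G \<and> word_prod G w = \<one>\<^bsub>G\<^esub>
          \<and> word_type C m w = k})"

definition exps :: "nat \<Rightarrow> (nat \<Rightarrow> nat) set" where
  "exps m = {k. \<forall>i. m \<le> i \<longrightarrow> k i = 0}"

text \<open>A formal power series F in m variables (coefficients indexed by exps m)
  is a rational function: Q * F = P for polynomials P, Q with Q nonzero.\<close>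
definition rational_series :: "nat \<Rightarrow> ((nat \<Rightarrow> nat) \<Rightarrow> rat) \<Rightarrow> bool" where
  "rational_series m F \<longleftrightarrow>
     (\<exists>P Q :: (nat \<Rightarrow> nat) \<Rightarrow> rat.
        finite {k. P k \<noteq> 0} \<and> finite {k. Q k \<noteq> 0} \<and>
        {k. P k \<noteq> 0} \<subseteq> exps m \<and> {k. Q k \<noteq> 0} \<subseteq> exps m \<and>
        (\<exists>k. Q k \<noteq> 0) \<and>
        (\<forall>k \<in> exps m.
           (\<Sum>j \<in> {j \<in> exps m. \<forall>i. j i \<le> k i}. Q j * F (\<lambda>i. k i - j i)) = P k))"

definition is_conj_class :: "('a, 'b) monoid_scheme \<Rightarrow> 'a set \<Rightarrow> bool" where
  "is_conj_class G A \<longleftrightarrow>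
     (\<exists>g \<in> carrier G. A = {h \<otimes>\<^bsub>G\<^esub> g \<otimes>\<^bsub>G\<^esub> inv\<^bsub>G\<^esub> h | h. h \<in> carrier G})"

end

theory Submission
  imports Defs
begin

text \<open>Write \<open>N = |G|\<close> and \<open>h(k)\<close> for the coefficients. If a word of type \<open>k + N e\<^sub>i\<close> with
  \<open>k\<^sub>i \<ge> 2N\<^sup>2\<close> is given, some \<open>c \<in> C\<^sub>i\<close> occurs at least \<open>2N\<close> times; Hurwitz moves gather
  two blocks \<open>c\<^sup>N\<close> in front. Because \<open>c\<^sup>N = 1\<close>, such a block commutes with every factor, and
  because the remaining factors generate \<open>G\<close>, it can be conjugated into \<open>g\<^sup>N\<close> for a fixed
  \<open>g \<in> C\<^sub>i\<close>. Hence every element of type \<open>k + N e\<^sub>i\<close> is \<open>x\<^sub>g\<^sup>N s\<close> with \<open>s\<close> of type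
  \<open>k\<close>, and \<open>h(k + N e\<^sub>i) \<le> h(k)\<close> once \<open>k\<^sub>i \<ge> 2N\<^sup>2\<close>.

  A function \<open>\<nat>\<^sup>m \<rightarrow> \<nat>\<close> that eventually decreases along the steps \<open>N e\<^sub>i\<close> is eventually
  constant along them, by Dickson's lemma applied to its sublevel sets. So \<open>h\<close> is eventually
  \<open>N\<close>-periodic in each variable, and \<open>\<Prod>\<^sub>i (1 - t\<^sub>i\<^sup>N)\<close> times the series is a polynomial.\<close>

section \<open>Antitone functions on exponent vectors\<close>

definition supported_on :: "nat set \<Rightarrow> (nat \<Rightarrow> nat) set" where
  "supported_on I = {t. \<forall>l. l \<notin> I \<longrightarrow> t l = 0}"

lemma supported_on_update [simp]:
  "t \<in> supported_on I \<Longrightarrow> i \<in> I \<Longrightarrow> t(i := s) \<in> supported_on I"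
  by (auto simp: supported_on_def)

definition upclosed_in :: "nat set \<Rightarrow> (nat \<Rightarrow> nat) set \<Rightarrow> bool" where
  "upclosed_in I U \<longleftrightarrow> U \<subseteq> supported_on I \<and> (\<forall>t\<in>U. \<forall>t'\<in>supported_on I. t \<le> t' \<longrightarrow> t' \<in> U)"

definition slice :: "nat set \<Rightarrow> nat \<Rightarrow> (nat \<Rightarrow> nat) set \<Rightarrow> nat \<Rightarrow> (nat \<Rightarrow> nat) set" where
  "slice I j U s = {t \<in> supported_on I. t(j := s) \<in> U}"

lemma slice_update:
  assumes "upclosed_in (insert j I) U" "t \<in> slice I j U s" "t' \<in> supported_on I" "t(j := s) \<le> t'(j := s')"
  shows "t' \<in> slice I j U s'"
proof -
  have "t'(j := s') \<in> supported_on (insert j I)" using assms(3) by (simp add: supported_on_def)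
  then show ?thesis using assms by (auto simp: upclosed_in_def slice_def)
qed

lemma upclosed_slice:
  assumes "upclosed_in (insert j I) U"
  shows "upclosed_in I (slice I j U s)"
  unfolding upclosed_in_def
proof (intro conjI ballI impI)
  show "slice I j U s \<subseteq> supported_on I" by (auto simp: slice_def)
  fix t t' assume t: "t \<in> slice I j U s" "t' \<in> supported_on I" "t \<le> t'"
  have "t(j := s) \<le> t'(j := s)" using t(3) by (simp add: le_fun_def)
  then show "t' \<in> slice I j U s" using slice_update[OF assms t(1,2)] by blast
qed

lemma slice_mono:
  assumes "upclosed_in (insert j I) U" "s \<le> s'"
  shows "slice I j U s \<subseteq> slice I j U s'"
proof
  fix t assume t: "t \<in> slice I j U s"
  then have "t \<in> supported_on I" by (simp add: slice_def)
  moreover have "t(j := s) \<le> t(j := s')" using assms(2) by (simp add: le_fun_def)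
  ultimately show "t \<in> slice I j U s'" using slice_update[OF assms(1) t] by blast
qed

definition has_finite_basis :: "(nat \<Rightarrow> nat) set \<Rightarrow> bool" where
  "has_finite_basis U \<longleftrightarrow> (\<exists>B. finite B \<and> B \<subseteq> U \<and> (\<forall>t\<in>U. \<exists>b\<in>B. b \<le> t))"

text \<open>Each basis element of the union lies in some slice; take \<open>s\<^sub>0\<close> beyond all of these.\<close>
lemma slices_stabilise:
  assumes U: "upclosed_in (insert j I) U" and "has_finite_basis (\<Union>s. slice I j U s)"
  shows "\<exists>s\<^sub>0. \<forall>s. slice I j U s \<subseteq> slice I j U s\<^sub>0"
proof -
  obtain B where B: "finite B" "B \<subseteq> (\<Union>s. slice I j U s)" "\<forall>t\<in>(\<Union>s. slice I j U s). \<exists>b\<in>B. b \<le> t"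
    using assms(2) unfolding has_finite_basis_def by blast
  then obtain sl where sl: "\<And>b. b \<in> B \<Longrightarrow> b \<in> slice I j U (sl b)" by (metis UN_E subsetD)
  define s\<^sub>0 where "s\<^sub>0 = Max (insert 0 (sl ` B))"
  have B_s\<^sub>0: "b \<in> slice I j U s\<^sub>0" if "b \<in> B" for b
  proof -
    have "sl b \<le> s\<^sub>0" unfolding s\<^sub>0_def using B(1) that by (intro Max_ge) auto
    then show ?thesis using slice_mono[OF U \<open>sl b \<le> s\<^sub>0\<close>] sl[OF that] by blast
  qed
  have "t \<in> slice I j U s\<^sub>0" if t: "t \<in> slice I j U s" for s t
  proof -
    obtain b where "b \<in> B" "b \<le> t" using B(3) t by blast
    moreover have "t \<in> supported_on I" using t by (simp add: slice_def)
    ultimately show ?thesis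
      using B_s\<^sub>0 upclosed_slice[OF U, of s\<^sub>0] unfolding upclosed_in_def by blast
  qed
  then show ?thesis by blast
qed

text \<open>Once the slices of \<open>U\<close> along coordinate \<open>j\<close> stabilise at \<open>s\<^sub>0\<close>, the bases of the slices
  \<open>s \<le> s\<^sub>0\<close> together form a basis of \<open>U\<close>.\<close>
lemma dickson_finite_basis:
  assumes "finite I" and "upclosed_in I U"
  shows "has_finite_basis U"
  using assms
proof (induction I arbitrary: U rule: finite_induct)
  case empty
  then have "U \<subseteq> {\<lambda>_. 0}" by (auto simp: upclosed_in_def supported_on_def)
  then show ?case using finite_subset by (auto simp: has_finite_basis_def)
next
  case (insert j I)
  let ?S = "slice I j U"
  have "upclosed_in I (\<Union>s. ?S s)"
    using upclosed_slice[OF insert.prems] unfolding upclosed_in_def by blast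
  then have "has_finite_basis (\<Union>s. ?S s)" by (rule insert.IH)
  then obtain s\<^sub>0 where S_stable: "\<And>s. ?S s \<subseteq> ?S s\<^sub>0"
    using slices_stabilise[OF insert.prems] by blast
  have "has_finite_basis (?S s)" for s
    using insert.IH[OF upclosed_slice[OF insert.prems]] .
  then obtain B where B: "\<And>s. finite (B s)" "\<And>s. B s \<subseteq> ?S s" "\<And>s. \<forall>t\<in>?S s. \<exists>b\<in>B s. b \<le> t"
    unfolding has_finite_basis_def by metis
  let ?B = "\<Union>s\<le>s\<^sub>0. (\<lambda>t. t(j := s)) ` B s"
  have "\<exists>b\<in>?B. b \<le> t" if "t \<in> U" for t
  proof -
    define s where "s = min (t j) s\<^sub>0"
    have "t(j := 0) \<in> ?S (t j)"
      using \<open>t \<in> U\<close> insert.prems by (auto simp: slice_def upclosed_in_def supported_on_def)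
    then have "t(j := 0) \<in> ?S s"
      using S_stable by (cases "t j \<le> s\<^sub>0") (auto simp: s_def min_def)
    then obtain b where "b \<in> B s" "b \<le> t(j := 0)" using B(3) by blast
    then have "b(j := s) \<in> ?B" "b(j := s) \<le> t"
      by (auto simp: s_def le_fun_def split: if_splits)
    then show ?thesis by blast
  qed
  moreover have "finite ?B" "?B \<subseteq> U" using B(1,2) by (auto simp: slice_def)
  ultimately show ?case unfolding has_finite_basis_def by blast
qed

text \<open>Any \<open>M\<close> above all coordinates of a finite basis of \<open>U\<close> works.\<close>
lemma upclosed_coordinate_threshold:
  assumes "finite I" and "upclosed_in I U"
  shows "\<exists>M. \<forall>t\<in>supported_on I. \<forall>i. M \<le> t i \<longrightarrow> t(i := t i + 1) \<in> U \<longrightarrow> t \<in> U"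
proof -
  obtain B where B: "finite B" "B \<subseteq> U" "\<forall>t\<in>U. \<exists>b\<in>B. b \<le> t"
    using dickson_finite_basis[OF assms] by (auto simp: has_finite_basis_def)
  define M where "M = Suc (\<Sum>b\<in>B. \<Sum>l\<in>I. b l)"
  have below_M: "b i < M" if "b \<in> B" for b i
  proof (cases "i \<in> I")
    case True
    have "b i \<le> (\<Sum>l\<in>I. b l)" using True \<open>finite I\<close> by (intro member_le_sum) auto
    also have "\<dots> \<le> (\<Sum>b\<in>B. \<Sum>l\<in>I. b l)" using that B(1) by (intro member_le_sum) auto
    finally show ?thesis unfolding M_def by simp
  next
    case False
    then show ?thesis using that B(2) assms(2) by (auto simp: upclosed_in_def supported_on_def M_def)
  qed
  have "t \<in> U" if t: "t \<in> supported_on I" "M \<le> t i" "t(i := t i + 1) \<in> U" for t i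
  proof -
    obtain b where b: "b \<in> B" "b \<le> t(i := t i + 1)" using B(3) t(3) by blast
    have "b \<le> t"
      unfolding le_fun_def
    proof
      fix l show "b l \<le> t l"
        using le_funD[OF b(2), of l] below_M[OF b(1), of i] \<open>M \<le> t i\<close> by (cases "l = i") auto
    qed
    then show ?thesis using assms(2) b(1) B(2) t(1) by (auto simp: upclosed_in_def)
  qed
  then show ?thesis by blast
qed

lemma antitone_if_unit_steps:
  assumes "finite I"
    and step: "\<And>t i. t \<in> supported_on I \<Longrightarrow> i \<in> I \<Longrightarrow> f (t(i := t i + 1)) \<le> (f t :: 'b :: order)"
  shows "t \<in> supported_on I \<Longrightarrow> t' \<in> supported_on I \<Longrightarrow> t \<le> t' \<Longrightarrow> f t' \<le> f t"
proof (induction "\<Sum>l\<in>I. t' l - t l" arbitrary: t rule: less_induct)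
  case less
  show ?case
  proof (cases "\<forall>l\<in>I. t l = t' l")
    case True
    then have "t = t'" using less.prems by (auto simp: supported_on_def fun_eq_iff)
    then show ?thesis by simp
  next
    case False
    then obtain l where l: "l \<in> I" "t l < t' l"
      using less.prems(3) by (auto simp: le_fun_def dest: spec[of _ l] order.not_eq_order_implies_strict)
    define t1 where "t1 = t(l := t l + 1)"
    have "(\<Sum>x\<in>I. t' x - t1 x) < (\<Sum>x\<in>I. t' x - t x)"
      by (rule sum_strict_mono_ex1[OF \<open>finite I\<close>]) (use l in \<open>auto simp: t1_def\<close>)
    moreover have "t1 \<in> supported_on I" "t1 \<le> t'"
      using less.prems l by (auto simp: t1_def le_fun_def)
    ultimately have "f t' \<le> f t1" using less.hyps less.prems(2) by blast
    also have "f t1 \<le> f t" unfolding t1_def using step less.prems(1) l(1) .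
    finally show ?thesis .
  qed
qed

text \<open>Apply the threshold lemma to the finitely many sublevel sets \<open>{t. f t < v}\<close>, \<open>v \<le> f 0\<close>,
  which are up-closed because \<open>f\<close> is antitone.\<close>
lemma antitone_eventually_constant:
  assumes "finite I"
    and step: "\<And>t i. t \<in> supported_on I \<Longrightarrow> i \<in> I \<Longrightarrow> f (t(i := t i + 1)) \<le> (f t :: nat)"
  shows "\<exists>M. \<forall>t\<in>supported_on I. \<forall>i\<in>I. M \<le> t i \<longrightarrow> f (t(i := t i + 1)) = f t"
proof -
  note anti = antitone_if_unit_steps[OF assms]
  define U where "U v = {t \<in> supported_on I. f t < v}" for v
  have "\<exists>M. \<forall>t\<in>supported_on I. \<forall>i. M \<le> t i \<longrightarrow> t(i := t i + 1) \<in> U v \<longrightarrow> t \<in> U v" for v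
  proof (rule upclosed_coordinate_threshold[OF \<open>finite I\<close>])
    show "upclosed_in I (U v)"
      using anti by (fastforce simp: upclosed_in_def U_def)
  qed
  then obtain M where M: "\<And>v t i. t \<in> supported_on I \<Longrightarrow> M v \<le> t i \<Longrightarrow> t(i := t i + 1) \<in> U v \<Longrightarrow> t \<in> U v"
    by metis
  have "f (t(i := t i + 1)) = f t"
    if t: "t \<in> supported_on I" "i \<in> I" "(\<Sum>v\<le>f (\<lambda>_. 0). M v) \<le> t i" for t i
  proof (rule antisym)
    show "f (t(i := t i + 1)) \<le> f t" using step t by blast
    have "f t \<le> f (\<lambda>_. 0)" using anti t(1) by (simp add: supported_on_def le_fun_def)
    then have "M (f t) \<le> (\<Sum>v\<le>f (\<lambda>_. 0). M v)" by (intro member_le_sum) auto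
    then have "M (f t) \<le> t i" using t(3) by linarith
    then have "t(i := t i + 1) \<notin> U (f t)"
      using M[OF t(1), of "f t" i] by (auto simp: U_def)
    then show "f t \<le> f (t(i := t i + 1))" using t by (simp add: U_def not_less)
  qed
  then show ?thesis by blast
qed

lemma finite_bounded_exps: "finite {k \<in> exps m. \<forall>l. k l \<le> b l}"
proof (rule finite_subset)
  show "{k \<in> exps m. \<forall>l. k l \<le> b l} \<subseteq> (\<lambda>f l. if l < m then f l else 0) ` (PiE {..<m} (\<lambda>l. {..b l}))"
  proof
    fix k assume k: "k \<in> {k \<in> exps m. \<forall>l. k l \<le> b l}"
    show "k \<in> (\<lambda>f l. if l < m then f l else 0) ` (PiE {..<m} (\<lambda>l. {..b l}))"
    proof (rule image_eqI)
      show "k = (\<lambda>l. if l < m then restrict k {..<m} l else 0)"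
        using k by (auto simp: exps_def fun_eq_iff)
      show "restrict k {..<m} \<in> PiE {..<m} (\<lambda>l. {..b l})"
        using k by (auto simp: restrict_PiE_iff)
    qed
  qed
qed (intro finite_imageI finite_PiE; simp)

lemma shifted_eventually_constant:
  fixes F :: "(nat \<Rightarrow> nat) \<Rightarrow> nat"
  assumes dec: "\<And>k i. k \<in> exps m \<Longrightarrow> i < m \<Longrightarrow> K \<le> k i \<Longrightarrow> F (k(i := k i + n)) \<le> F k"
    and b: "b \<in> exps m"
  shows "\<exists>M. \<forall>t\<in>supported_on {l. l < m \<and> K \<le> b l}. \<forall>i\<in>{l. l < m \<and> K \<le> b l}. M \<le> t i \<longrightarrow>
      F (\<lambda>l. b l + n * (t(i := t i + 1)) l) = F (\<lambda>l. b l + n * t l)"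
proof (rule antitone_eventually_constant)
  fix t i assume t: "t \<in> supported_on {l. l < m \<and> K \<le> b l}" and i: "i \<in> {l. l < m \<and> K \<le> b l}"
  have "(\<lambda>l. b l + n * (t(i := t i + 1)) l) = (\<lambda>l. b l + n * t l)(i := b i + n * t i + n)"
    by (auto simp: fun_eq_iff)
  moreover have "(\<lambda>l. b l + n * t l) \<in> exps m" using b t by (auto simp: exps_def supported_on_def)
  ultimately show "F (\<lambda>l. b l + n * (t(i := t i + 1)) l) \<le> F (\<lambda>l. b l + n * t l)"
    using dec[of "\<lambda>l. b l + n * t l" i] i by simp
qed simp

text \<open>Write \<open>k = b + n t\<close> with \<open>b\<close> bounded by \<open>K + n\<close> and apply the previous lemma to each
  of the finitely many \<open>b\<close>.\<close>
lemma eventually_periodic_if_eventually_decreasing: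
  fixes F :: "(nat \<Rightarrow> nat) \<Rightarrow> nat"
  assumes "n \<ge> 1"
    and dec: "\<And>k i. k \<in> exps m \<Longrightarrow> i < m \<Longrightarrow> K \<le> k i \<Longrightarrow> F (k(i := k i + n)) \<le> F k"
  shows "\<exists>M. \<forall>k\<in>exps m. \<forall>i<m. M \<le> k i \<longrightarrow> F (k(i := k i + n)) = F k"
proof -
  define L where "L b = {l. l < m \<and> K \<le> b l}" for b :: "nat \<Rightarrow> nat"
  define shift where "shift b t = (\<lambda>l. b l + n * t l)" for b t :: "nat \<Rightarrow> nat"
  have "\<exists>M. \<forall>t\<in>supported_on (L b). \<forall>i\<in>L b. M \<le> t i \<longrightarrow>
      F (shift b (t(i := t i + 1))) = F (shift b t)" if "b \<in> exps m" for b
    unfolding L_def shift_def by (rule shifted_eventually_constant[OF dec that])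
  then obtain Mb where Mb: "\<And>b t i. b \<in> exps m \<Longrightarrow> t \<in> supported_on (L b) \<Longrightarrow> i \<in> L b \<Longrightarrow>
      Mb b \<le> t i \<Longrightarrow> F (shift b (t(i := t i + 1))) = F (shift b t)"
    by metis
  define Base where "Base = {b \<in> exps m. \<forall>l. b l \<le> K + n}"
  define M where "M = K + n + n * (\<Sum>b\<in>Base. Mb b)"
  have "F (k(i := k i + n)) = F k" if k: "k \<in> exps m" "i < m" "M \<le> k i" for k i
  proof -
    define b where "b l = (if k l < K then k l else K + (k l - K) mod n)" for l
    define t where "t l = (if k l < K then 0 else (k l - K) div n)" for l
    have k_eq: "k = shift b t"
      by (auto simp: fun_eq_iff shift_def b_def t_def mod_mult_div_eq)
    have "b l \<le> K + n" for l
      using \<open>n \<ge> 1\<close> by (auto simp: b_def intro: less_imp_le_nat)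
    then have b: "b \<in> Base" using k(1) by (auto simp: Base_def exps_def b_def)
    have t: "t \<in> supported_on (L b)"
      using k(1) by (auto simp: supported_on_def L_def exps_def b_def t_def)
    have i: "i \<in> L b" using k by (auto simp: L_def M_def b_def)
    have "Mb b \<le> (\<Sum>b\<in>Base. Mb b)"
      using b finite_bounded_exps[of m "\<lambda>_. K + n"] by (intro member_le_sum) (auto simp: Base_def)
    also have "\<dots> \<le> (k i - K) div n"
      using k(3) \<open>n \<ge> 1\<close> by (auto simp: M_def less_eq_div_iff_mult_less_eq mult.commute)
    finally have "Mb b \<le> t i" using k(3) by (simp add: t_def M_def)
    moreover have "shift b (t(i := t i + 1)) = k(i := k i + n)"
      by (auto simp: k_eq shift_def fun_eq_iff)
    ultimately show ?thesis
      using Mb[of b t i] b t i k_eq by (simp add: Base_def)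
  qed
  then show ?thesis by blast
qed

section \<open>Eventually periodic series are rational\<close>

text \<open>Coefficients of \<open>1 - x\<^sup>n\<close> and of \<open>\<Prod>l<m. (1 - t\<^sub>l\<^sup>n)\<close>, for \<open>n \<ge> 1\<close>.\<close>
definition one_minus_pow_coeff :: "nat \<Rightarrow> nat \<Rightarrow> rat" where
  "one_minus_pow_coeff n d = (if d = 0 then 1 else if d = n then -1 else 0)"

definition periodic_denominator :: "nat \<Rightarrow> nat \<Rightarrow> (nat \<Rightarrow> nat) \<Rightarrow> rat" where
  "periodic_denominator m n j = (if j \<in> exps m then \<Prod>l<m. one_minus_pow_coeff n (j l) else 0)"

lemma periodic_denominator_support:
  assumes "periodic_denominator m n j \<noteq> 0"
  shows "j \<in> exps m \<and> (\<forall>l. j l \<le> n)"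
proof
  show j: "j \<in> exps m" using assms by (simp add: periodic_denominator_def split: if_splits)
  show "\<forall>l. j l \<le> n"
  proof
    fix l show "j l \<le> n"
    proof (cases "l < m")
      case True
      then have "one_minus_pow_coeff n (j l) \<noteq> 0"
        using assms j by (auto simp: periodic_denominator_def prod_zero_iff)
      then show ?thesis by (auto simp: one_minus_pow_coeff_def split: if_splits)
    qed (use j in \<open>simp add: exps_def\<close>)
  qed
qed

lemma periodic_denominator_zero [simp]: "periodic_denominator m n (\<lambda>_. 0) = 1"
  by (simp add: periodic_denominator_def one_minus_pow_coeff_def exps_def)

definition exponent_swap :: "nat \<Rightarrow> nat \<Rightarrow> nat" where
  "exponent_swap n d = (if d = 0 then n else if d = n then 0 else d)"

lemma exponent_swap_swap [simp]: "exponent_swap n (exponent_swap n d) = d"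
  by (simp add: exponent_swap_def)

lemma periodic_denominator_swap:
  assumes "n \<ge> 1" "i < m"
  shows "periodic_denominator m n (j(i := exponent_swap n (j i))) = - periodic_denominator m n j"
proof -
  have swap: "one_minus_pow_coeff n (exponent_swap n d) = - one_minus_pow_coeff n d" for d
    using assms(1) by (auto simp: one_minus_pow_coeff_def exponent_swap_def)
  have "j(i := d) \<in> exps m \<longleftrightarrow> j \<in> exps m" for d using assms(2) by (auto simp: exps_def)
  moreover have "(\<Prod>l<m. one_minus_pow_coeff n ((j(i := exponent_swap n (j i))) l))
      = - (\<Prod>l<m. one_minus_pow_coeff n (j l))"
    using assms(2) by (simp add: prod.remove swap)
  ultimately show ?thesis by (simp add: periodic_denominator_def)
qed

text \<open>Exchanging the exponents \<open>0\<close> and \<open>n\<close> of \<open>t\<^sub>i\<close> is a sign-reversing involution on the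
  terms of the convolution, since \<open>F\<close> does not see the shift by \<open>n\<close> in coordinate \<open>i\<close>.\<close>
lemma periodic_convolution_vanishes:
  fixes F :: "(nat \<Rightarrow> nat) \<Rightarrow> rat"
  assumes "n \<ge> 1"
    and per: "\<And>k i. k \<in> exps m \<Longrightarrow> i < m \<Longrightarrow> M \<le> k i \<Longrightarrow> F (k(i := k i + n)) = F k"
    and k: "k \<in> exps m" and i: "i < m" "M + n \<le> k i"
  shows "(\<Sum>j\<in>{j \<in> exps m. \<forall>l. j l \<le> k l}. periodic_denominator m n j * F (\<lambda>l. k l - j l)) = 0"
proof -
  define J where "J = {j \<in> exps m. \<forall>l. j l \<le> k l}"
  define \<sigma> where "\<sigma> j = j(i := exponent_swap n (j i))" for j :: "nat \<Rightarrow> nat"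
  define summand where "summand j = periodic_denominator m n j * F (\<lambda>l. k l - j l)" for j
  have \<sigma>_J: "\<sigma> j \<in> J" if "j \<in> J" for j
    using that i by (auto simp: J_def exps_def \<sigma>_def exponent_swap_def)
  have F_\<sigma>: "F (\<lambda>l. k l - \<sigma> j l) = F (\<lambda>l. k l - j l)" for j
  proof (cases "j i = 0 \<or> j i = n")
    case True
    define lo where "lo = (\<lambda>l. k l - (j(i := n)) l)"
    have "lo \<in> exps m" using k by (auto simp: lo_def exps_def)
    moreover have "M \<le> lo i" using i by (simp add: lo_def)
    moreover have "lo(i := lo i + n) = (\<lambda>l. k l - (j(i := 0)) l)"
      using i by (auto simp: lo_def fun_eq_iff)
    ultimately have "F (\<lambda>l. k l - (j(i := 0)) l) = F lo" using per i(1) by metis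
    moreover have "j = j(i := 0) \<and> \<sigma> j = j(i := n) \<or> j = j(i := n) \<and> \<sigma> j = j(i := 0)"
      using True \<open>n \<ge> 1\<close> by (auto simp: \<sigma>_def exponent_swap_def)
    ultimately show ?thesis unfolding lo_def by metis
  qed (simp add: \<sigma>_def exponent_swap_def)
  have \<sigma>_\<sigma>: "\<sigma> (\<sigma> j) = j" for j by (simp add: \<sigma>_def)
  have "sum summand J = sum (summand \<circ> \<sigma>) J"
    by (rule sum.reindex_bij_witness[of _ \<sigma> \<sigma>]) (auto simp: \<sigma>_\<sigma> \<sigma>_J)
  also have "\<dots> = - sum summand J"
    using periodic_denominator_swap[OF \<open>n \<ge> 1\<close> i(1)] F_\<sigma>
    by (simp add: summand_def \<sigma>_def sum_negf)
  finally show ?thesis by (simp add: J_def summand_def)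
qed

lemma rational_series_if_eventually_periodic:
  fixes F :: "(nat \<Rightarrow> nat) \<Rightarrow> rat"
  assumes "n \<ge> 1"
    and per: "\<And>k i. k \<in> exps m \<Longrightarrow> i < m \<Longrightarrow> M \<le> k i \<Longrightarrow> F (k(i := k i + n)) = F k"
  shows "rational_series m F"
proof -
  define Q where "Q = periodic_denominator m n"
  define P where "P k = (if k \<in> exps m
      then \<Sum>j\<in>{j \<in> exps m. \<forall>l. j l \<le> k l}. Q j * F (\<lambda>l. k l - j l) else 0)" for k
  have P_support: "{k. P k \<noteq> 0} \<subseteq> {k \<in> exps m. \<forall>l. k l \<le> M + n}"
  proof safe
    fix k l assume "P k \<noteq> 0"
    then show k: "k \<in> exps m" by (auto simp: P_def split: if_splits)
    show "k l \<le> M + n"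
    proof (rule ccontr)
      assume "\<not> k l \<le> M + n"
      moreover from this have "l < m" using k by (cases "l < m") (auto simp: exps_def)
      ultimately have "P k = 0"
        using periodic_convolution_vanishes[OF assms k] k by (simp add: P_def Q_def)
      with \<open>P k \<noteq> 0\<close> show False by simp
    qed
  qed
  have Q_support: "{j. Q j \<noteq> 0} \<subseteq> {j \<in> exps m. \<forall>l. j l \<le> n}"
    using periodic_denominator_support by (auto simp: Q_def)
  show ?thesis
    unfolding rational_series_def
  proof (rule exI[where x = P], rule exI[where x = Q], intro conjI)
    show "finite {k. P k \<noteq> 0}" by (rule finite_subset[OF P_support finite_bounded_exps])
    show "finite {j. Q j \<noteq> 0}" by (rule finite_subset[OF Q_support finite_bounded_exps])
    show "{k. P k \<noteq> 0} \<subseteq> exps m" "{j. Q j \<noteq> 0} \<subseteq> exps m" using P_support Q_support by auto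
    show "\<exists>j. Q j \<noteq> 0" by (rule exI[of _ "\<lambda>_. 0"]) (simp add: Q_def)
    show "\<forall>k\<in>exps m. (\<Sum>j\<in>{j \<in> exps m. \<forall>i. j i \<le> k i}. Q j * F (\<lambda>i. k i - j i)) = P k"
      by (simp add: P_def)
  qed
qed

lemma rational_series_if_eventually_decreasing:
  fixes F :: "(nat \<Rightarrow> nat) \<Rightarrow> nat"
  assumes "n \<ge> 1"
    and "\<And>k i. k \<in> exps m \<Longrightarrow> i < m \<Longrightarrow> K \<le> k i \<Longrightarrow> F (k(i := k i + n)) \<le> F k"
  shows "rational_series m (\<lambda>k. of_nat (F k))"
proof -
  obtain M where "\<forall>k\<in>exps m. \<forall>i<m. M \<le> k i \<longrightarrow> F (k(i := k i + n)) = F k"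
    using eventually_periodic_if_eventually_decreasing[OF assms] by blast
  then show ?thesis
    by (intro rational_series_if_eventually_periodic[OF \<open>n \<ge> 1\<close>, of m M]) simp
qed

section \<open>Hurwitz moves\<close>

context group
begin

lemma mult_inv_cancel_left [simp]: "x \<in> carrier G \<Longrightarrow> y \<in> carrier G \<Longrightarrow> x \<otimes> (inv x \<otimes> y) = y"
  by (simp add: m_assoc [symmetric])

lemma inv_mult_cancel_left [simp]: "x \<in> carrier G \<Longrightarrow> y \<in> carrier G \<Longrightarrow> inv x \<otimes> (x \<otimes> y) = y"
  by (simp add: m_assoc [symmetric])

lemma conj_conj:
  "\<lbrakk>x \<in> carrier G; g \<in> carrier G; h \<in> carrier G\<rbrakk> \<Longrightarrow> g \<otimes> (h \<otimes> x \<otimes> inv h) \<otimes> inv g = (g \<otimes> h) \<otimes> x \<otimes> inv (g \<otimes> h)"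
  by (simp add: m_assoc inv_mult_group)

lemma generate_insert_redundant:
  assumes "S \<subseteq> carrier G" "x \<in> generate G S"
  shows "generate G (insert x S) = generate G S"
proof
  show "generate G (insert x S) \<subseteq> generate G S"
    using assms generate.incl[of _ S G] by (intro generate_subgroup_incl generate_is_subgroup) auto
qed (simp add: mono_generate subset_insertI)

lemma conj_in_generate:
  assumes "S \<subseteq> carrier G" "x \<in> generate G S" "h \<in> generate G S"
  shows "h \<otimes> x \<otimes> inv h \<in> generate G S"
  using assms generate_is_subgroup[OF assms(1)] by (simp add: subgroup.m_closed subgroup.m_inv_closed)

lemma word_prod_Nil [simp]: "word_prod G [] = \<one>"
  by (simp add: word_prod_def)

lemma word_prod_Cons [simp]: "word_prod G (x # w) = x \<otimes> word_prod G w"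
  by (simp add: word_prod_def)

lemma word_prod_closed [intro, simp]: "set w \<subseteq> carrier G \<Longrightarrow> word_prod G w \<in> carrier G"
  by (induction w) auto

lemma word_prod_append:
  "set u \<subseteq> carrier G \<Longrightarrow> set w \<subseteq> carrier G \<Longrightarrow> word_prod G (u @ w) = word_prod G u \<otimes> word_prod G w"
  by (induction u) (auto simp: m_assoc)

lemma word_prod_replicate: "g \<in> carrier G \<Longrightarrow> word_prod G (replicate k g) = g [^] k"
  using nat_pow_Suc2[of g] by (induction k) (auto simp del: nat_pow_Suc)

lemma word_prod_replicate_order_append:
  assumes "finite (carrier G)" "g \<in> carrier G" "set s \<subseteq> carrier G"
  shows "word_prod G (replicate (order G) g @ s) = word_prod G s"
proof -
  have "set (replicate (order G) g) \<subseteq> carrier G" using assms(2) by auto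
  then show ?thesis
    using word_prod_append[of "replicate (order G) g" s] assms
    by (simp add: word_prod_replicate pow_order_eq_1)
qed

end

lemma fact_equiv_eq_equivclp: "fact_equiv G Ocl = equivclp (hurwitz_step G Ocl)"
  by (simp add: fact_equiv_def equivclp_def symclp_def [abs_def])

lemma hurwitz_step_append_cong:
  "hurwitz_step G Ocl w w' \<Longrightarrow> hurwitz_step G Ocl (p @ w @ q) (p @ w' @ q)"
  unfolding hurwitz_step_def by (elim exE conjE) (metis append.assoc)

lemma equivclp_map:
  assumes "\<And>x y. r x y \<Longrightarrow> r (f x) (f y)" and "equivclp r x y"
  shows "equivclp r (f x) (f y)"
  using assms(2) by (induction rule: equivclp_induct) (auto intro: equivclp_into_equivclp assms(1))

locale conj_closed_factors = group +
  fixes Ocl :: "'a set"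
  assumes Ocl_subset: "Ocl \<subseteq> carrier G"
    and Ocl_conj: "x \<in> Ocl \<Longrightarrow> h \<in> carrier G \<Longrightarrow> h \<otimes> x \<otimes> inv h \<in> Ocl"
begin

abbreviation fequiv :: "'a list \<Rightarrow> 'a list \<Rightarrow> bool" where
  "fequiv \<equiv> fact_equiv G Ocl"

lemma Ocl_carrier [simp]: "x \<in> Ocl \<Longrightarrow> x \<in> carrier G"
  using Ocl_subset by blast

lemma Ocl_conj_inv: "x \<in> Ocl \<Longrightarrow> h \<in> carrier G \<Longrightarrow> inv h \<otimes> x \<otimes> h \<in> Ocl"
  using Ocl_conj[of x "inv h"] by simp

lemma words_carrier: "set w \<subseteq> Ocl \<Longrightarrow> set w \<subseteq> carrier G"
  using Ocl_subset by blast

lemma fequiv_refl [simp]: "fequiv w w"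
  by (simp add: fact_equiv_eq_equivclp)

lemma fequiv_sym: "fequiv u v \<Longrightarrow> fequiv v u"
  unfolding fact_equiv_eq_equivclp by (rule equivclp_sym)

lemma fequiv_trans [trans]: "fequiv u v \<Longrightarrow> fequiv v w \<Longrightarrow> fequiv u w"
  unfolding fact_equiv_eq_equivclp by (rule equivclp_trans)

lemma fequiv_append_cong: "fequiv w w' \<Longrightarrow> fequiv (p @ w @ q) (p @ w' @ q)"
  unfolding fact_equiv_eq_equivclp by (rule equivclp_map) (rule hurwitz_step_append_cong)

lemma fequiv_Cons_cong: "fequiv w w' \<Longrightarrow> fequiv (x # w) (x # w')"
  using fequiv_append_cong[of w w' "[x]" "[]"] by simp

lemma fact_class_eq: "fequiv w w' \<Longrightarrow> fact_class G Ocl w = fact_class G Ocl w'"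
  unfolding fact_class_def using fequiv_trans fequiv_sym by blast

lemma fequiv_move_right:
  "a \<in> Ocl \<Longrightarrow> b \<in> Ocl \<Longrightarrow> fequiv (u @ [a, b] @ v) (u @ [b, inv b \<otimes> a \<otimes> b] @ v)"
  unfolding fact_equiv_eq_equivclp by (rule r_into_equivclp) (auto simp: hurwitz_step_def)

lemma fequiv_move_left:
  "a \<in> Ocl \<Longrightarrow> b \<in> Ocl \<Longrightarrow> fequiv (u @ [a, b] @ v) (u @ [a \<otimes> b \<otimes> inv a, a] @ v)"
  unfolding fact_equiv_eq_equivclp by (rule r_into_equivclp) (auto simp: hurwitz_step_def)

lemma hurwitz_step_Ocl: "hurwitz_step G Ocl w w' \<Longrightarrow> set w \<subseteq> Ocl \<longleftrightarrow> set w' \<subseteq> Ocl"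
  unfolding hurwitz_step_def
  by (elim exE conjE disjE) (simp_all add: Ocl_conj Ocl_conj_inv)

text \<open>A move of the second kind is the inverse of a move of the first kind, so an invariant
  only has to be checked on moves of the first kind.\<close>
lemma fequiv_invariant:
  assumes move: "\<And>u v a b. a \<in> Ocl \<Longrightarrow> b \<in> Ocl \<Longrightarrow> set u \<subseteq> Ocl \<Longrightarrow> set v \<subseteq> Ocl \<Longrightarrow>
      f (u @ [b, inv b \<otimes> a \<otimes> b] @ v) = f (u @ [a, b] @ v)"
    and "fequiv w w'" "set w \<subseteq> Ocl"
  shows "set w' \<subseteq> Ocl \<and> f w' = f w"
proof -
  have step_eq: "f y = f x" if xy: "hurwitz_step G Ocl x y" and x: "set x \<subseteq> Ocl" for x y
  proof -
    obtain u v a b where ab: "a \<in> Ocl" "b \<in> Ocl" "x = u @ [a, b] @ v" and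
      y: "y = u @ [b, inv b \<otimes> a \<otimes> b] @ v \<or> y = u @ [a \<otimes> b \<otimes> inv a, a] @ v"
      using xy unfolding hurwitz_step_def by blast
    have uv: "set u \<subseteq> Ocl" "set v \<subseteq> Ocl" using x ab(3) by auto
    from y show ?thesis
    proof
      assume "y = u @ [a \<otimes> b \<otimes> inv a, a] @ v"
      moreover have "inv a \<otimes> (a \<otimes> b \<otimes> inv a) \<otimes> a = b" using ab by (simp add: m_assoc)
      ultimately show ?thesis
        using move[OF Ocl_conj[OF ab(2) Ocl_carrier[OF ab(1)]] ab(1) uv] ab(3) by simp
    qed (use move ab uv in simp)
  qed
  from \<open>fequiv w w'\<close> show ?thesis
    unfolding fact_equiv_eq_equivclp
  proof (induction rule: equivclp_induct)
    case (step y z)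
    then have "set z \<subseteq> Ocl" using hurwitz_step_Ocl by blast
    moreover have "f z = f y" using step step_eq \<open>set z \<subseteq> Ocl\<close> by auto
    ultimately show ?case using step.IH by simp
  qed (use assms(3) in simp)
qed

lemma fequiv_word_prod:
  assumes "fequiv w w'" "set w \<subseteq> Ocl"
  shows "word_prod G w' = word_prod G w"
proof -
  have "word_prod G (u @ [b, inv b \<otimes> a \<otimes> b] @ v) = word_prod G (u @ [a, b] @ v)"
    if "a \<in> Ocl" "b \<in> Ocl" "set u \<subseteq> Ocl" "set v \<subseteq> Ocl" for u v a b
  proof -
    have "set u \<subseteq> carrier G" "set v \<subseteq> carrier G" using that words_carrier by auto
    then show ?thesis using that by (simp add: word_prod_append m_assoc)
  qed
  from fequiv_invariant[of "word_prod G", OF this assms] show ?thesis by simp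
qed

lemma fequiv_generate:
  assumes "fequiv w w'" "set w \<subseteq> Ocl"
  shows "generate G (set w') = generate G (set w)"
proof -
  have "generate G (insert b (insert (inv b \<otimes> a \<otimes> b) Z)) = generate G (insert a (insert b Z))"
    if ab: "a \<in> Ocl" "b \<in> Ocl" and Z: "Z \<subseteq> carrier G" for a b Z
  proof -
    let ?S = "insert b (insert (inv b \<otimes> a \<otimes> b) Z)" and ?T = "insert a (insert b Z)"
    have S: "?S \<subseteq> carrier G" and T: "?T \<subseteq> carrier G" using ab Z by auto
    have "b \<otimes> (inv b \<otimes> a \<otimes> b) \<otimes> inv b \<in> generate G ?S"
      using S by (intro conj_in_generate) (auto intro: generate.incl)
    then have "a \<in> generate G ?S" using ab by (simp add: m_assoc)
    moreover have "inv b \<otimes> a \<otimes> inv (inv b) \<in> generate G ?T"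
      using T by (intro conj_in_generate generate_m_inv_closed) (auto intro: generate.incl)
    then have "inv b \<otimes> a \<otimes> b \<in> generate G ?T" using ab by simp
    ultimately have "generate G ?S = generate G (insert a ?S)"
      and "generate G ?T = generate G (insert (inv b \<otimes> a \<otimes> b) ?T)"
      using S T by (simp_all add: generate_insert_redundant)
    then show ?thesis by (simp add: insert_commute)
  qed
  then have "generate G (set (u @ [b, inv b \<otimes> a \<otimes> b] @ v)) = generate G (set (u @ [a, b] @ v))"
    if "a \<in> Ocl" "b \<in> Ocl" "set u \<subseteq> Ocl" "set v \<subseteq> Ocl" for u v a b
    using that words_carrier[of u] words_carrier[of v] by (simp add: Un_insert_right insert_commute)
  from fequiv_invariant[of "\<lambda>w. generate G (set w)", OF this assms] show ?thesis by simp
qed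

lemma fequiv_count_conj_invariant:
  assumes D: "\<And>x h. x \<in> carrier G \<Longrightarrow> h \<in> carrier G \<Longrightarrow> h \<otimes> x \<otimes> inv h \<in> D \<longleftrightarrow> x \<in> D"
    and "fequiv w w'" "set w \<subseteq> Ocl"
  shows "length (filter (\<lambda>x. x \<in> D) w') = length (filter (\<lambda>x. x \<in> D) w)"
proof -
  have "inv b \<otimes> a \<otimes> b \<in> D \<longleftrightarrow> a \<in> D" if "a \<in> Ocl" "b \<in> Ocl" for a b
    using D[of a "inv b"] that by simp
  then have "length (filter (\<lambda>x. x \<in> D) (u @ [b, inv b \<otimes> a \<otimes> b] @ v))
      = length (filter (\<lambda>x. x \<in> D) (u @ [a, b] @ v))"
    if "a \<in> Ocl" "b \<in> Ocl" for u v a b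
    using that by simp
  from fequiv_invariant[of "\<lambda>w. length (filter (\<lambda>x. x \<in> D) w)", OF this assms(2,3)] show ?thesis
    by simp
qed

lemma fequiv_to_front:
  assumes "c \<in> Ocl" "set u \<subseteq> Ocl"
  shows "fequiv (u @ c # v) (c # map (\<lambda>a. inv c \<otimes> a \<otimes> c) u @ v)"
  using assms(2)
proof (induction u)
  case (Cons x u)
  then have "fequiv (x # u @ c # v) (x # c # map (\<lambda>a. inv c \<otimes> a \<otimes> c) u @ v)"
    by (simp add: fequiv_Cons_cong)
  also have "fequiv \<dots> (c # (inv c \<otimes> x \<otimes> c) # map (\<lambda>a. inv c \<otimes> a \<otimes> c) u @ v)"
    using fequiv_move_right[of x c "[]"] Cons.prems assms(1) by simp
  finally show ?case by simp
qed simp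

lemma fequiv_to_back:
  assumes "c \<in> Ocl" "set u \<subseteq> Ocl"
  shows "fequiv (c # u) (u @ [inv (word_prod G u) \<otimes> c \<otimes> word_prod G u])"
  using assms
proof (induction u arbitrary: c)
  case (Cons x u)
  have "fequiv (c # x # u) (x # (inv x \<otimes> c \<otimes> x) # u)"
    using fequiv_move_right[of c x "[]"] Cons.prems by simp
  also have "fequiv \<dots> (x # u @ [inv (word_prod G u) \<otimes> (inv x \<otimes> c \<otimes> x) \<otimes> word_prod G u])"
    using Cons by (simp add: fequiv_Cons_cong Ocl_conj_inv)
  finally show ?case
    using Cons.prems words_carrier[of u] by (simp add: m_assoc inv_mult_group)
qed simp

lemma fequiv_replicate_to_back:
  assumes "c \<in> Ocl" "set u \<subseteq> Ocl"
  shows "fequiv (replicate k c @ u) (u @ replicate k (inv (word_prod G u) \<otimes> c \<otimes> word_prod G u))"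
proof (induction k)
  case (Suc k)
  let ?c' = "inv (word_prod G u) \<otimes> c \<otimes> word_prod G u"
  have "fequiv (c # replicate k c @ u) (c # u @ replicate k ?c')"
    using Suc by (simp add: fequiv_Cons_cong)
  also have "fequiv \<dots> (u @ ?c' # replicate k ?c')"
    using fequiv_append_cong[OF fequiv_to_back[OF assms], of "[]" "replicate k ?c'"] by simp
  finally show ?case by simp
qed simp

lemma fequiv_pass_left:
  assumes "x \<in> Ocl" "set u \<subseteq> Ocl"
  shows "fequiv (u @ [x]) ((word_prod G u \<otimes> x \<otimes> inv (word_prod G u)) # u)"
  using assms(2)
proof (induction u)
  case (Cons y u)
  let ?x' = "word_prod G u \<otimes> x \<otimes> inv (word_prod G u)"
  have x': "?x' \<in> Ocl" using Cons.prems assms(1) words_carrier by (simp add: Ocl_conj)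
  have "fequiv (y # u @ [x]) (y # ?x' # u)"
    using Cons by (simp add: fequiv_Cons_cong)
  also have "fequiv \<dots> ((y \<otimes> ?x' \<otimes> inv y) # y # u)"
    using fequiv_move_left[of y ?x' "[]"] Cons.prems x' by simp
  finally show ?case
    using Cons.prems assms(1) words_carrier[of u] by (simp add: conj_conj)
qed (use assms in simp)

text \<open>Since \<open>c [^] order G = \<one>\<close>, passing a factor through the block \<open>c\<^sup>N\<close> does not change it.\<close>
lemma fequiv_replicate_order_commute:
  assumes "finite (carrier G)" "c \<in> Ocl" "set u \<subseteq> Ocl"
  shows "fequiv (replicate (order G) c @ u) (u @ replicate (order G) c)"
  using assms(3)
proof (induction u)
  case (Cons x u)
  have "set (replicate (order G) c) \<subseteq> Ocl" using assms(2) by auto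
  with Cons.prems have "fequiv (replicate (order G) c @ [x]) (x # replicate (order G) c)"
    using fequiv_pass_left[of x "replicate (order G) c"] assms(2)
    by (simp add: word_prod_replicate pow_order_eq_1 assms(1))
  from fequiv_append_cong[OF this, of "[]" u]
  have "fequiv (replicate (order G) c @ x # u) (x # replicate (order G) c @ u)" by simp
  also have "fequiv \<dots> (x # u @ replicate (order G) c)"
    using Cons by (simp add: fequiv_Cons_cong)
  finally show ?case by simp
qed simp

lemma fequiv_replicate_order_conj_prefix:
  assumes "finite (carrier G)" "c \<in> Ocl" "set u \<subseteq> Ocl" "set v \<subseteq> Ocl"
  shows "fequiv (replicate (order G) c @ u @ v)
    (replicate (order G) (word_prod G u \<otimes> c \<otimes> inv (word_prod G u)) @ u @ v)"
proof -
  define p where "p = word_prod G u"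
  have p: "p \<in> carrier G" using assms(3) words_carrier by (simp add: p_def)
  have "fequiv (replicate (order G) c @ u @ v) (u @ replicate (order G) c @ v)"
    using fequiv_append_cong[OF fequiv_replicate_order_commute[OF assms(1-3)], of "[]" v] by simp
  moreover have "fequiv (replicate (order G) (p \<otimes> c \<otimes> inv p) @ u @ v)
      (u @ replicate (order G) (inv p \<otimes> (p \<otimes> c \<otimes> inv p) \<otimes> p) @ v)"
    using fequiv_append_cong[OF fequiv_replicate_to_back[OF Ocl_conj[OF assms(2) p] assms(3), of "order G"], of "[]" v]
    by (simp add: p_def)
  moreover have "inv p \<otimes> (p \<otimes> c \<otimes> inv p) \<otimes> p = c" using p assms(2) by (simp add: m_assoc)
  ultimately show ?thesis unfolding p_def[symmetric] by (metis fequiv_sym fequiv_trans)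
qed

definition block_conjugators :: "'a list \<Rightarrow> 'a set" where
  "block_conjugators s = {h \<in> carrier G. \<forall>c\<in>Ocl.
      fequiv (replicate (order G) c @ s) (replicate (order G) (h \<otimes> c \<otimes> inv h) @ s)}"

lemma subgroup_block_conjugators: "subgroup (block_conjugators s) G"
proof
  show "block_conjugators s \<subseteq> carrier G" by (auto simp: block_conjugators_def)
  show "\<one> \<in> block_conjugators s" by (simp add: block_conjugators_def)
next
  fix g h assume g: "g \<in> block_conjugators s" and h: "h \<in> block_conjugators s"
  have "fequiv (replicate (order G) c @ s) (replicate (order G) (g \<otimes> h \<otimes> c \<otimes> inv (g \<otimes> h)) @ s)"
    if c: "c \<in> Ocl" for c
  proof -
    have "h \<otimes> c \<otimes> inv h \<in> Ocl" using c h by (simp add: block_conjugators_def Ocl_conj)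
    then have "fequiv (replicate (order G) (h \<otimes> c \<otimes> inv h) @ s)
        (replicate (order G) (g \<otimes> (h \<otimes> c \<otimes> inv h) \<otimes> inv g) @ s)"
      using g by (simp add: block_conjugators_def)
    moreover have "g \<otimes> (h \<otimes> c \<otimes> inv h) \<otimes> inv g = g \<otimes> h \<otimes> c \<otimes> inv (g \<otimes> h)"
      using c g h by (simp add: block_conjugators_def conj_conj)
    ultimately show ?thesis using h c by (auto simp: block_conjugators_def intro: fequiv_trans)
  qed
  then show "g \<otimes> h \<in> block_conjugators s" using g h by (simp add: block_conjugators_def)
next
  fix h assume h: "h \<in> block_conjugators s"
  have "fequiv (replicate (order G) c @ s) (replicate (order G) (inv h \<otimes> c \<otimes> h) @ s)"
    if c: "c \<in> Ocl" for c
  proof -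
    have "inv h \<otimes> c \<otimes> h \<in> Ocl" using c h by (simp add: block_conjugators_def Ocl_conj_inv)
    then have "fequiv (replicate (order G) (inv h \<otimes> c \<otimes> h) @ s)
        (replicate (order G) (h \<otimes> (inv h \<otimes> c \<otimes> h) \<otimes> inv h) @ s)"
      using h by (simp add: block_conjugators_def)
    moreover have "h \<otimes> (inv h \<otimes> c \<otimes> h) \<otimes> inv h = c"
      using c h by (simp add: block_conjugators_def m_assoc)
    ultimately show ?thesis by (simp add: fequiv_sym)
  qed
  then show "inv h \<in> block_conjugators s" using h by (simp add: block_conjugators_def)
qed

text \<open>Each letter of \<open>s\<close> is the quotient of two consecutive prefix products, which are block
  conjugators by the previous lemma.\<close>
lemma fequiv_replicate_order_conj:
  assumes "finite (carrier G)" "set s \<subseteq> Ocl" "generate G (set s) = carrier G"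
    and "c \<in> Ocl" "h \<in> carrier G"
  shows "fequiv (replicate (order G) c @ s) (replicate (order G) (h \<otimes> c \<otimes> inv h) @ s)"
proof -
  let ?H = "block_conjugators s"
  have prefix: "word_prod G u \<in> ?H" if "s = u @ v" for u v
    using that assms(1,2) fequiv_replicate_order_conj_prefix[of _ u v] words_carrier[of u]
    by (auto simp: block_conjugators_def)
  have "set s \<subseteq> ?H"
  proof
    fix x assume "x \<in> set s"
    then obtain u v where s: "s = u @ x # v" by (meson split_list)
    have "inv (word_prod G u) \<otimes> word_prod G (u @ [x]) = x"
      using s assms(2) words_carrier[of u] by (simp add: word_prod_append)
    moreover have "inv (word_prod G u) \<otimes> word_prod G (u @ [x]) \<in> ?H"
      using prefix[of u "x # v"] prefix[of "u @ [x]" v] s subgroup_block_conjugators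
      by (simp add: subgroup.m_closed subgroup.m_inv_closed)
    ultimately show "x \<in> ?H" by simp
  qed
  then have "h \<in> ?H" using generate_subgroup_incl[OF _ subgroup_block_conjugators] assms(3,5) by blast
  then show ?thesis using assms(4) by (simp add: block_conjugators_def)
qed

lemma fequiv_gather:
  assumes "c \<in> Ocl"
  shows "set w \<subseteq> Ocl \<Longrightarrow> k \<le> count_list w c \<Longrightarrow> \<exists>r. set r \<subseteq> Ocl \<and> fequiv w (replicate k c @ r)"
proof (induction k arbitrary: w)
  case (Suc k)
  then have "c \<in> set w" by (cases "c \<in> set w") auto
  then obtain u v where w: "w = u @ c # v" by (meson split_list)
  define u' where "u' = map (\<lambda>a. inv c \<otimes> a \<otimes> c) u"
  have uv: "set u \<subseteq> Ocl" "set v \<subseteq> Ocl" using Suc.prems w by auto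
  have "count_list u' c = count_list u c"
    using uv(1) assms unfolding u'_def by (induction u) (auto simp: inv_solve_left')
  then have "k \<le> count_list (u' @ v) c" using Suc.prems w by simp
  moreover have "set (u' @ v) \<subseteq> Ocl" using uv assms by (auto simp: u'_def Ocl_conj_inv)
  ultimately obtain r where r: "set r \<subseteq> Ocl" "fequiv (u' @ v) (replicate k c @ r)"
    using Suc.IH by blast
  have "fequiv w (c # u' @ v)" using fequiv_to_front[OF assms uv(1)] w by (simp add: u'_def)
  also have "fequiv \<dots> (c # replicate k c @ r)" using r(2) by (rule fequiv_Cons_cong)
  finally show ?case using r(1) by auto
qed auto

end

section \<open>The coefficients decrease along steps of length |G|\<close>

lemma pigeonhole_count_list:
  assumes "finite A" and "card A * B < length (filter (\<lambda>x. x \<in> A) w)"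
  shows "\<exists>c\<in>A. B < count_list w c"
proof (rule ccontr)
  assume "\<not> (\<exists>c\<in>A. B < count_list w c)"
  have "length (filter (\<lambda>x. x \<in> A) w) = (\<Sum>c\<in>A. count_list (filter (\<lambda>x. x \<in> A) w) c)"
    using sum_count_set[of "filter (\<lambda>x. x \<in> A) w" A] assms(1) by fastforce
  also have "\<dots> = (\<Sum>c\<in>A. count_list w c)"
    by (rule sum.cong [OF refl]) (induction w, auto)
  also have "\<dots> \<le> card A * B"
    using \<open>\<not> (\<exists>c\<in>A. B < count_list w c)\<close> sum_bounded_above[of A "count_list w" B] by (auto simp: not_less)
  finally show False using assms(2) by simp
qed

lemma card_image_le_if_factors:
  assumes "finite A" and "\<And>x y. x \<in> A \<Longrightarrow> y \<in> A \<Longrightarrow> g x = g y \<Longrightarrow> f x = f y"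
  shows "card (f ` A) \<le> card (g ` A)"
proof -
  have "f (SOME y. y \<in> A \<and> g y = g x) = f x" if "x \<in> A" for x
    using someI[of "\<lambda>y. y \<in> A \<and> g y = g x" x] that assms(2) by blast
  then have "f ` A = (\<lambda>z. f (SOME y. y \<in> A \<and> g y = z)) ` g ` A"
    unfolding image_image by (intro image_cong) auto
  then show ?thesis using assms(1) by (simp add: card_image_le)
qed

locale disjoint_conj_classes = group +
  fixes Ocl :: "'a set" and C :: "nat \<Rightarrow> 'a set" and m :: nat
  assumes finite_carrier: "finite (carrier G)"
    and conj_class: "\<And>i. i < m \<Longrightarrow> is_conj_class G (C i)"
    and classes_disjoint: "\<And>i j. i < m \<Longrightarrow> j < m \<Longrightarrow> i \<noteq> j \<Longrightarrow> C i \<inter> C j = {}"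
    and Ocl_eq: "Ocl = (\<Union>i<m. C i)"
begin

lemma class_subset: "i < m \<Longrightarrow> C i \<subseteq> carrier G"
  using conj_class[of i] by (auto simp: is_conj_class_def)

lemma class_conj_iff:
  assumes "i < m" "x \<in> carrier G" "h \<in> carrier G"
  shows "h \<otimes> x \<otimes> inv h \<in> C i \<longleftrightarrow> x \<in> C i"
proof -
  obtain g where g: "g \<in> carrier G" "C i = {k \<otimes> g \<otimes> inv k | k. k \<in> carrier G}"
    using conj_class[OF assms(1)] by (auto simp: is_conj_class_def)
  have "h \<otimes> x \<otimes> inv h \<in> C i" if "x \<in> C i" "h \<in> carrier G" for x h
    using that g by (force simp: conj_conj)
  from this[of x h] this[of "h \<otimes> x \<otimes> inv h" "inv h"] assms show ?thesis
    by (auto simp: m_assoc)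
qed

lemma class_conjugate:
  assumes "i < m" "c \<in> C i" "g \<in> C i"
  shows "\<exists>h\<in>carrier G. g = h \<otimes> c \<otimes> inv h"
proof -
  obtain r where r: "r \<in> carrier G" "C i = {k \<otimes> r \<otimes> inv k | k. k \<in> carrier G}"
    using conj_class[OF assms(1)] by (auto simp: is_conj_class_def)
  then obtain h1 h2 where h: "h1 \<in> carrier G" "c = h1 \<otimes> r \<otimes> inv h1" "h2 \<in> carrier G" "g = h2 \<otimes> r \<otimes> inv h2"
    using assms(2,3) by auto
  then have "g = (h2 \<otimes> inv h1) \<otimes> c \<otimes> inv (h2 \<otimes> inv h1)"
    using r by (simp add: m_assoc inv_mult_group)
  then show ?thesis using h by blast
qed

lemma class_nonempty: "i < m \<Longrightarrow> \<exists>g. g \<in> C i"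
  using conj_class[of i] by (force simp: is_conj_class_def)

end

sublocale disjoint_conj_classes \<subseteq> conj_closed_factors
proof
  show "Ocl \<subseteq> carrier G" using class_subset Ocl_eq by auto
  show "h \<otimes> x \<otimes> inv h \<in> Ocl" if "x \<in> Ocl" "h \<in> carrier G" for x h
    using that class_conj_iff class_subset Ocl_eq by blast
qed

context disjoint_conj_classes
begin

lemma fequiv_word_type:
  assumes "fequiv w w'" "set w \<subseteq> Ocl"
  shows "word_type C m w' = word_type C m w"
  using fequiv_count_conj_invariant[OF class_conj_iff assms] by (auto simp: word_type_def)

lemma length_le_sum_word_type: "set w \<subseteq> Ocl \<Longrightarrow> length w \<le> (\<Sum>i<m. word_type C m w i)"
proof (induction w)
  case (Cons x w)
  obtain j where j: "j < m" "x \<in> C j" using Cons.prems Ocl_eq by auto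
  have "1 \<le> (\<Sum>i<m. if x \<in> C i then 1 else 0 :: nat)"
    using member_le_sum[of j "{..<m}" "\<lambda>i. if x \<in> C i then 1 else 0 :: nat"] j by simp
  moreover have "(\<Sum>i<m. word_type C m (x # w) i)
      = (\<Sum>i<m. word_type C m w i + (if x \<in> C i then 1 else 0))"
    by (rule sum.cong) (auto simp: word_type_def)
  ultimately show ?case using Cons by (simp add: sum.distrib)
qed simp

lemma word_type_replicate_append:
  assumes "i < m" "g \<in> C i"
  shows "word_type C m (replicate n g @ s) = (word_type C m s)(i := word_type C m s i + n)"
proof
  fix j
  have "g \<in> C j \<longleftrightarrow> j = i" if "j < m"
    using classes_disjoint[of j i] that assms by auto
  then show "word_type C m (replicate n g @ s) j = ((word_type C m s)(i := word_type C m s i + n)) j"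
    using assms(1) by (auto simp: word_type_def filter_replicate)
qed

definition type_words :: "(nat \<Rightarrow> nat) \<Rightarrow> 'a list set" where
  "type_words k = {w. set w \<subseteq> Ocl \<and> generate G (set w) = carrier G \<and> word_prod G w = \<one>
      \<and> word_type C m w = k}"

lemma h_coeff_eq: "h_coeff G Ocl C m k = card (fact_class G Ocl ` type_words k)"
  by (simp add: h_coeff_def type_words_def)

lemma finite_type_words: "finite (type_words k)"
proof (rule finite_subset)
  show "type_words k \<subseteq> {w. set w \<subseteq> Ocl \<and> length w \<le> (\<Sum>i<m. k i)}"
    using length_le_sum_word_type by (auto simp: type_words_def)
  show "finite {w. set w \<subseteq> Ocl \<and> length w \<le> (\<Sum>i<m. k i)}"
    using finite_carrier Ocl_subset by (intro finite_lists_length_le) (rule finite_subset)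
qed

lemma type_words_frequent_letter:
  assumes i: "i < m" and k: "2 * order G * order G \<le> k i"
    and w: "w \<in> type_words (k(i := k i + order G))"
  shows "\<exists>c\<in>C i. 2 * order G \<le> count_list w c"
proof -
  let ?N = "order G"
  have "card (C i) \<le> ?N" unfolding order_def using class_subset[OF i] finite_carrier by (rule card_mono[rotated])
  then have "card (C i) * (2 * ?N - 1) \<le> ?N * (2 * ?N)" by (intro mult_mono) auto
  also have "\<dots> < k i + ?N"
    using k order_gt_0_iff_finite finite_carrier by (simp add: mult.commute mult.left_commute)
  also have "\<dots> = length (filter (\<lambda>x. x \<in> C i) w)"
    using w i by (auto simp: type_words_def word_type_def dest: fun_cong[of _ _ i])
  finally obtain c where "c \<in> C i" "2 * ?N - 1 < count_list w c"
    using pigeonhole_count_list finite_subset[OF class_subset[OF i] finite_carrier] by blast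
  then show ?thesis by (intro bexI[of _ c]) auto
qed

text \<open>Gather \<open>2N\<close> copies of a frequent letter \<open>c\<close> in front: \<open>w \<approx> c\<^sup>N c\<^sup>N r\<close>. The rest
  \<open>c\<^sup>N r\<close> still generates \<open>G\<close>, which allows the first block to be conjugated to \<open>g\<^sup>N\<close>.\<close>
lemma type_words_extract_block:
  assumes i: "i < m" and k: "2 * order G * order G \<le> k i" and g: "g \<in> C i"
    and w: "w \<in> type_words (k(i := k i + order G))"
  shows "\<exists>s\<in>type_words k. fequiv w (replicate (order G) g @ s)"
proof -
  let ?N = "order G"
  have N: "1 \<le> ?N" using finite_carrier by (simp add: order_gt_0_iff_finite Suc_le_eq)
  have wO: "set w \<subseteq> Ocl" using w by (simp add: type_words_def)
  obtain c where c: "c \<in> C i" "2 * ?N \<le> count_list w c"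
    using type_words_frequent_letter[OF i k w] by blast
  then have cO: "c \<in> Ocl" using i Ocl_eq by auto
  obtain r where r: "set r \<subseteq> Ocl" "fequiv w (replicate ?N c @ replicate ?N c @ r)"
    using fequiv_gather[OF cO wO c(2)] by (auto simp: mult_2 replicate_add)
  define s where "s = replicate ?N c @ r"
  have sO: "set s \<subseteq> Ocl" using r(1) cO by (auto simp: s_def)
  have "generate G (set s) = carrier G"
    using fequiv_generate[OF r(2) wO] w N by (simp add: type_words_def s_def)
  moreover obtain h where "h \<in> carrier G" "g = h \<otimes> c \<otimes> inv h" using class_conjugate[OF i c(1) g] by blast
  ultimately have "fequiv (replicate ?N c @ s) (replicate ?N g @ s)"
    using fequiv_replicate_order_conj[OF finite_carrier sO _ cO] by simp
  with r(2) have wg: "fequiv w (replicate ?N g @ s)" by (auto simp: s_def intro: fequiv_trans)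
  have "word_prod G s = word_prod G (replicate ?N g @ s)"
    using g class_subset[OF i] words_carrier[OF sO]
    by (subst word_prod_replicate_order_append[OF finite_carrier]) auto
  also have "\<dots> = \<one>" using fequiv_word_prod[OF wg wO] w by (simp add: type_words_def)
  finally have "word_prod G s = \<one>" .
  moreover have "word_type C m s = k"
  proof
    fix j
    have "(word_type C m s)(i := word_type C m s i + ?N) = k(i := k i + ?N)"
      using fequiv_word_type[OF wg wO] w word_type_replicate_append[OF i g]
      by (simp add: type_words_def)
    from fun_cong[OF this, of j] show "word_type C m s j = k j" by (cases "j = i") auto
  qed
  ultimately show ?thesis using sO \<open>generate G (set s) = carrier G\<close> wg by (auto simp: type_words_def)
qed

lemma h_coeff_shift_le:
  assumes i: "i < m" and k: "2 * order G * order G \<le> k i"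
  shows "h_coeff G Ocl C m (k(i := k i + order G)) \<le> h_coeff G Ocl C m k"
proof -
  let ?N = "order G" and ?cls = "fact_class G Ocl"
  obtain g where g: "g \<in> C i" using class_nonempty[OF i] by blast
  have "?cls ` type_words (k(i := k i + ?N)) \<subseteq> (\<lambda>s. ?cls (replicate ?N g @ s)) ` type_words k"
  proof
    fix Y assume "Y \<in> ?cls ` type_words (k(i := k i + ?N))"
    then obtain w where w: "w \<in> type_words (k(i := k i + ?N))" "Y = ?cls w" by blast
    then obtain s where "s \<in> type_words k" "fequiv w (replicate ?N g @ s)"
      using type_words_extract_block[of i k g w] i k g by blast
    then show "Y \<in> (\<lambda>s. ?cls (replicate ?N g @ s)) ` type_words k"
      using w(2) fact_class_eq by blast
  qed
  then have "h_coeff G Ocl C m (k(i := k i + ?N)) \<le> card ((\<lambda>s. ?cls (replicate ?N g @ s)) ` type_words k)"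
    unfolding h_coeff_eq by (intro card_mono finite_imageI finite_type_words)
  also have "\<dots> \<le> card (?cls ` type_words k)"
  proof (rule card_image_le_if_factors[OF finite_type_words])
    fix s s' assume "?cls s = ?cls s'"
    then have "fequiv s s'" by (auto simp: fact_class_def)
    from fequiv_append_cong[OF this, of "replicate ?N g" "[]"]
    show "?cls (replicate ?N g @ s) = ?cls (replicate ?N g @ s')" by (simp add: fact_class_eq)
  qed
  finally show ?thesis by (simp add: h_coeff_eq)
qed

end

theorem theorem4p6:
  fixes G :: "('a, 'b) monoid_scheme" and Ocl :: "'a set" and C :: "nat \<Rightarrow> 'a set" and m :: nat
  assumes "group G"
    and "finite (carrier G)"
    and "\<And>i. i < m \<Longrightarrow> is_conj_class G (C i)"
    and "\<And>i j. i < m \<Longrightarrow> j < m \<Longrightarrow> i \<noteq> j \<Longrightarrow> C i \<inter> C j = {}"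
    and "\<And>i. i < m \<Longrightarrow> C i \<noteq> {\<one>\<^bsub>G\<^esub>}"
    and "\<And>i. i < m \<Longrightarrow> generate G (C i) = carrier G"
    and "Ocl = (\<Union>i<m. C i)"
  shows "rational_series m (\<lambda>k. of_nat (h_coeff G Ocl C m k))"
proof -
  interpret disjoint_conj_classes G Ocl C m
    using assms by (simp add: disjoint_conj_classes_def disjoint_conj_classes_axioms_def)
  have "1 \<le> order G" using assms(2) by (simp add: order_gt_0_iff_finite Suc_le_eq)
  then show ?thesis
    using h_coeff_shift_le by (intro rational_series_if_eventually_decreasing) auto
qed

end
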